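(* Let $n\ge 2$. Then $\max\{d_W(\sigma,\rho) : \sigma,\rho\in P^B(\emptyset;n)\} = n^2$.
   Context: $S^B_n$ is the set of bijections $\sigma$ of $\{-n,\dots,-1,1,\dots,n\}$ with $\sigma(-i)=-\sigma(i)$ for all $i$, with multiplication given by composition; a signed permutation is written in one-line notation $\sigma(1)\cdots\sigma(n)$. A signed permutation $\sigma$ has a peak at index $i\in\{2,\dots,n-1\}$ if $\sigma(i-1)<\sigma(i)>\sigma(i+1)$ (usual order on integers). $Peak(\sigma)$ is the set of indices where $\sigma$ has a peak, and for $S\subseteq[n]$, $P^B(S;n)=\{\sigma\in S^B_n : Peak(\sigma)=S\}$. The word metric is $d_W(\sigma,\rho)=\ell_B(\rho^{-1}\sigma)$, where $\ell_B(\gamma)$ is the minimum number of factors in an expression of $\gamma$ as a product of the Coxeter generators $s_0^B,\dots,s_{n-1}^B$; here $s_0^B$ swaps $1$ and $-1$ and fixes all other values, and for $1\le i<n$, $s_i^B$ swaps $i$ with $i+1$ and $-i$ with $-(i+1)$, fixing everything else. *)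

theory Defs
  imports Main
begin

text \<open>Signed permutations of {-n..-1,1..n}, represented as functions int => int
  that are the identity outside this domain.\<close>

definition signed_dom :: "nat \<Rightarrow> int set" where
  "signed_dom n = {-int n..-1} \<union> {1..int n}"

definition SB :: "nat \<Rightarrow> (int \<Rightarrow> int) set" where
  "SB n = {\<sigma>. bij_betw \<sigma> (signed_dom n) (signed_dom n)
              \<and> (\<forall>i\<in>signed_dom n. \<sigma> (-i) = - \<sigma> i)
              \<and> (\<forall>x. x \<notin> signed_dom n \<longrightarrow> \<sigma> x = x)}"

definition sB :: "nat \<Rightarrow> int \<Rightarrow> int" where
  "sB i x =
     (if i = 0 then (if x = 1 then -1 else if x = -1 then 1 else x)
      else let a = int i in
        (if x = a then a + 1 else if x = a + 1 then a
         else if x = -a then -(a + 1) else if x = -(a + 1) then -a else x))"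

definition lenB :: "nat \<Rightarrow> (int \<Rightarrow> int) \<Rightarrow> nat" where
  "lenB n \<gamma> = (LEAST k. \<exists>ws. length ws = k \<and> set ws \<subseteq> {0..<n}
                  \<and> \<gamma> = foldr (\<lambda>i f. sB i \<circ> f) ws id)"

definition dW :: "nat \<Rightarrow> (int \<Rightarrow> int) \<Rightarrow> (int \<Rightarrow> int) \<Rightarrow> nat" where
  "dW n \<sigma> \<rho> = lenB n (inv \<rho> \<circ> \<sigma>)"

definition Peak :: "nat \<Rightarrow> (int \<Rightarrow> int) \<Rightarrow> nat set" where
  "Peak n \<sigma> = {i \<in> {2..n-1}. \<sigma> (int i - 1) < \<sigma> (int i) \<and> \<sigma> (int i) > \<sigma> (int i + 1)}"

definition PB :: "nat set \<Rightarrow> nat \<Rightarrow> (int \<Rightarrow> int) set" where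
  "PB S n = {\<sigma> \<in> SB n. Peak n \<sigma> = S}"

end

(* For a signed permutation g let inv_weight n g count the ordered pairs (a, b) of positions in
   {-n..-1, 1..n} whose order g reverses, plus twice the number of positive positions with a
   negative value. Composing with a generator s_i on the left changes the relative order exactly
   of the pairs of positions whose values s_i swaps, so the weight grows by at most 4; when all
   these pairs are inversions of g (a left descent) it drops by exactly 4. Every g <> id has a
   left descent, since otherwise 0 < inv g 1 < ... < inv g n <= n forces g = id. Hence the weight
   is four times the Coxeter length. It is at most 4 n^2, with equality for w0 = -id, and both
   id and w0 have no peaks, so the maximal distance n^2 is attained between them. *)
theory Submission
  imports Defs
begin

lemma card_sym_diff_le:
  assumes "finite A" "finite B"
  shows "card (sym_diff A B) \<le> card A + card B"
proof -
  have "card (sym_diff A B) \<le> card (A \<union> B)" using assms by (intro card_mono) auto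
  also have "\<dots> \<le> card A + card B" by (rule card_Un_le)
  finally show ?thesis .
qed

lemma strict_mono_int_squeeze:
  fixes f :: "nat \<Rightarrow> int"
  assumes increasing: "\<And>j. 1 \<le> j \<Longrightarrow> j < n \<Longrightarrow> f j < f (Suc j)"
    and first: "0 < f 1" and last: "f n \<le> int n" and k: "1 \<le> k" "k \<le> n"
  shows "f k = int k"
proof -
  have "int k \<le> f k"
    using k(1)
  proof (induction k rule: dec_induct)
    case (step j)
    then show ?case using increasing[of j] k(2) by simp
  qed (use first in simp)
  moreover have "f k \<le> int k"
    using k(2)
  proof (induction k rule: inc_induct)
    case (step j)
    then show ?case using increasing[of j] k(1) by simp
  qed (use last in simp)
  ultimately show ?thesis by simp
qed

lemma signed_dom_iff: "x \<in> signed_dom n \<longleftrightarrow> x \<noteq> 0 \<and> \<bar>x\<bar> \<le> int n"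
  unfolding signed_dom_def by auto

lemma uminus_in_signed_dom_iff [simp]: "- x \<in> signed_dom n \<longleftrightarrow> x \<in> signed_dom n"
  unfolding signed_dom_iff by auto

lemma finite_signed_dom: "finite (signed_dom n)"
  unfolding signed_dom_def by auto

lemma card_signed_dom: "card (signed_dom n) = 2 * n"
proof -
  have "card ({-int n..-1} \<union> {1..int n}) = card {-int n..-1} + card {1..int n}"
    by (rule card_Un_disjoint) auto
  then show ?thesis unfolding signed_dom_def by simp
qed

lemma card_off_diagonal_signed_dom:
  "card {(a, b). a \<in> signed_dom n \<and> b \<in> signed_dom n \<and> a \<noteq> b} = 4 * n\<^sup>2 - 2 * n"
proof -
  let ?D = "signed_dom n"
  let ?diag = "(\<lambda>a. (a, a)) ` ?D"
  have "{(a, b). a \<in> ?D \<and> b \<in> ?D \<and> a \<noteq> b} = ?D \<times> ?D - ?diag" by auto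
  moreover have "card ?diag = card ?D" by (rule card_image) (auto simp: inj_on_def)
  moreover have "?diag \<subseteq> ?D \<times> ?D" by auto
  ultimately show ?thesis
    by (simp add: card_Diff_subset finite_signed_dom card_cartesian_product card_signed_dom
        power2_eq_square)
qed

lemma SB_bij_betw: "g \<in> SB n \<Longrightarrow> bij_betw g (signed_dom n) (signed_dom n)"
  and SB_uminus: "g \<in> SB n \<Longrightarrow> x \<in> signed_dom n \<Longrightarrow> g (- x) = - g x"
  and SB_fixed: "g \<in> SB n \<Longrightarrow> x \<notin> signed_dom n \<Longrightarrow> g x = x"
  unfolding SB_def by auto

lemma SB_in_signed_dom: "g \<in> SB n \<Longrightarrow> x \<in> signed_dom n \<Longrightarrow> g x \<in> signed_dom n"
  using SB_bij_betw bij_betwE by blast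

lemma bij_SB:
  assumes "g \<in> SB n"
  shows "bij g"
proof -
  have "bij_betw g (- signed_dom n) (- signed_dom n)"
    by (subst bij_betw_cong[where g = id]) (auto simp: SB_fixed[OF assms])
  from bij_betw_combine[OF SB_bij_betw[OF assms] this] show ?thesis by simp
qed

lemma id_in_SB: "id \<in> SB n"
  unfolding SB_def by auto

lemma comp_in_SB: "f \<in> SB n \<Longrightarrow> g \<in> SB n \<Longrightarrow> f \<circ> g \<in> SB n"
  unfolding SB_def by (auto intro: bij_betw_trans simp: SB_in_signed_dom)

lemma inv_in_SB:
  assumes g: "g \<in> SB n"
  shows "inv g \<in> SB n"
proof -
  have bij: "bij g" using bij_SB[OF g] .
  have image: "g ` signed_dom n = signed_dom n"
    using SB_bij_betw[OF g] by (rule bij_betw_imp_surj_on)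
  have "bij_betw (inv g) (signed_dom n) (signed_dom n)"
    using bij_betw_inv_into_subset[OF bij subset_UNIV image] .
  moreover have "inv g (- x) = - inv g x" if "x \<in> signed_dom n" for x
  proof -
    have "inv g x \<in> signed_dom n" using \<open>bij_betw (inv g) _ _\<close> that bij_betwE by blast
    then have "g (- inv g x) = - x"
      using SB_uminus[OF g] surj_f_inv_f[OF bij_is_surj[OF bij]] by simp
    then show ?thesis using bij by (metis inv_f_f bij_is_inj)
  qed
  moreover have "inv g x = x" if "x \<notin> signed_dom n" for x
    using SB_fixed[OF g that] bij by (metis inv_f_f bij_is_inj)
  ultimately show ?thesis unfolding SB_def by blast
qed

lemma sB_sB [simp]: "sB i (sB i x) = x"
  unfolding sB_def Let_def by auto

lemma sB_uminus: "sB i (- x) = - sB i x"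
  unfolding sB_def Let_def by auto

lemma sB_in_SB:
  assumes "i < n"
  shows "sB i \<in> SB n"
proof -
  have "sB i x \<in> signed_dom n \<longleftrightarrow> x \<in> signed_dom n" for x
    using assms unfolding sB_def Let_def signed_dom_iff by auto
  moreover have "sB i x = x" if "x \<notin> signed_dom n" for x
    using assms that unfolding sB_def Let_def signed_dom_iff by auto
  ultimately show ?thesis unfolding SB_def
    by (auto intro!: bij_betw_byWitness[where f' = "sB i"] simp: sB_uminus)
qed

definition w0 :: "nat \<Rightarrow> int \<Rightarrow> int" where
  "w0 n x = (if x \<in> signed_dom n then - x else x)"

lemma w0_in_SB: "w0 n \<in> SB n"
  unfolding SB_def w0_def by (auto intro!: bij_betw_byWitness[where f' = "w0 n"] simp: w0_def)

definition swapped_pairs :: "nat \<Rightarrow> (int \<times> int) set" where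
  "swapped_pairs i = (if i = 0 then {(1, -1), (-1, 1)} else
     {(int i, int i + 1), (int i + 1, int i), (- int i, - int i - 1), (- int i - 1, - int i)})"

lemma swapped_pairs_sym: "(x, y) \<in> swapped_pairs i \<longleftrightarrow> (y, x) \<in> swapped_pairs i"
  unfolding swapped_pairs_def by auto

lemma swapped_pairs_irrefl: "(x, x) \<notin> swapped_pairs i"
  unfolding swapped_pairs_def by auto

lemma swapped_pairs_subset: "i < n \<Longrightarrow> swapped_pairs i \<subseteq> signed_dom n \<times> signed_dom n"
  unfolding swapped_pairs_def by (auto simp: signed_dom_iff)

lemma card_swapped_pairs: "card (swapped_pairs i) = (if i = 0 then 2 else 4)"
  unfolding swapped_pairs_def by auto

lemma sB_less_swapped: "(x, y) \<in> swapped_pairs i \<Longrightarrow> sB i x < sB i y \<longleftrightarrow> y < x"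
  unfolding swapped_pairs_def sB_def Let_def by (auto split: if_splits)

lemma sB_strict_mono_not_swapped:
  assumes "x \<noteq> 0" "y \<noteq> 0" "x < y" "(x, y) \<notin> swapped_pairs i"
  shows "sB i x < sB i y"
proof (cases "i = 0")
  case True
  with assms show ?thesis unfolding sB_def swapped_pairs_def by auto
next
  case False
  then obtain a where a: "a = int i" "a \<ge> 1" by simp
  moreover have "\<not> (x = a \<and> y = a + 1)" "\<not> (x = - a - 1 \<and> y = - a)"
    using assms(4) False a(1) unfolding swapped_pairs_def by auto
  ultimately show ?thesis using assms(3) False unfolding sB_def Let_def
    using [[linarith_neq_limit = 3]] by (auto split: if_splits)
qed

lemma sB_less_not_swapped:
  assumes "x \<noteq> 0" "y \<noteq> 0" "x \<noteq> y" "(x, y) \<notin> swapped_pairs i"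
  shows "sB i x < sB i y \<longleftrightarrow> x < y"
  using assms sB_strict_mono_not_swapped[of x y i] sB_strict_mono_not_swapped[of y x i]
  by (metis swapped_pairs_sym not_less_iff_gr_or_eq)

definition inv_pairs :: "nat \<Rightarrow> (int \<Rightarrow> int) \<Rightarrow> (int \<times> int) set" where
  "inv_pairs n g =
     {(a, b) \<in> signed_dom n \<times> signed_dom n. a \<noteq> b \<and> (a < b) \<noteq> (g a < g b)}"

definition neg_entries :: "nat \<Rightarrow> (int \<Rightarrow> int) \<Rightarrow> int set" where
  "neg_entries n g = {b \<in> {1..int n}. g b < 0}"

definition inv_weight :: "nat \<Rightarrow> (int \<Rightarrow> int) \<Rightarrow> nat" where
  "inv_weight n g = card (inv_pairs n g) + 2 * card (neg_entries n g)"

definition swapped_positions :: "nat \<Rightarrow> (int \<Rightarrow> int) \<Rightarrow> nat \<Rightarrow> (int \<times> int) set" where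
  "swapped_positions n g i =
     {(a, b) \<in> signed_dom n \<times> signed_dom n. (g a, g b) \<in> swapped_pairs i}"

definition left_descent :: "nat \<Rightarrow> (int \<Rightarrow> int) \<Rightarrow> nat \<Rightarrow> bool" where
  "left_descent n g i \<longleftrightarrow> swapped_positions n g i \<subseteq> inv_pairs n g"

lemma finite_inv_pairs: "finite (inv_pairs n g)"
  by (rule finite_subset[of _ "signed_dom n \<times> signed_dom n"])
     (auto simp: inv_pairs_def finite_signed_dom)

lemma finite_neg_entries: "finite (neg_entries n g)"
  by (rule finite_subset[of _ "{1..int n}"]) (auto simp: neg_entries_def)

lemma finite_swapped_positions: "finite (swapped_positions n g i)"
  by (rule finite_subset[of _ "signed_dom n \<times> signed_dom n"])
     (auto simp: swapped_positions_def finite_signed_dom)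

lemma inv_pairs_sB:
  assumes g: "g \<in> SB n"
  shows "inv_pairs n (sB i \<circ> g) = sym_diff (inv_pairs n g) (swapped_positions n g i)"
proof -
  have "(a < b) \<noteq> (sB i (g a) < sB i (g b)) \<longleftrightarrow>
      ((a < b) \<noteq> (g a < g b)) \<noteq> ((g a, g b) \<in> swapped_pairs i)"
    if "a \<in> signed_dom n" "b \<in> signed_dom n" "a \<noteq> b" for a b
  proof -
    have "g a \<noteq> 0" "g b \<noteq> 0"
      using SB_in_signed_dom[OF g] that by (auto simp: signed_dom_iff)
    moreover have "g a \<noteq> g b" using bij_SB[OF g] that by (metis bij_is_inj injD)
    ultimately show ?thesis
      by (cases "(g a, g b) \<in> swapped_pairs i")
         (auto simp: sB_less_swapped sB_less_not_swapped)
  qed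
  moreover have "a \<noteq> b" if "(g a, g b) \<in> swapped_pairs i" for a b
    using that swapped_pairs_irrefl by metis
  ultimately show ?thesis unfolding inv_pairs_def swapped_positions_def by auto
qed

lemma swapped_positions_eq_image:
  assumes g: "g \<in> SB n" and "i < n"
  shows "swapped_positions n g i = map_prod (inv g) (inv g) ` swapped_pairs i"
proof -
  have bij: "bij g" using bij_SB[OF g] .
  have "(a, b) \<in> map_prod (inv g) (inv g) ` swapped_pairs i"
    if "(g a, g b) \<in> swapped_pairs i" for a b
    using that bij by (force simp: bij_is_inj)
  moreover have "inv g x \<in> signed_dom n" "g (inv g x) = x" if "x \<in> signed_dom n" for x
    using that SB_in_signed_dom[OF inv_in_SB[OF g]] bij by (auto simp: bij_is_surj surj_f_inv_f)
  ultimately show ?thesis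
    using swapped_pairs_subset[OF \<open>i < n\<close>] unfolding swapped_positions_def by fastforce
qed

lemma card_swapped_positions:
  assumes "g \<in> SB n" "i < n"
  shows "card (swapped_positions n g i) = card (swapped_pairs i)"
proof -
  have "inj (inv g)" by (rule surj_imp_inj_inv[OF bij_is_surj[OF bij_SB[OF assms(1)]]])
  then have "inj (map_prod (inv g) (inv g))" using prod.inj_map by blast
  then show ?thesis
    unfolding swapped_positions_eq_image[OF assms] by (simp add: card_image inj_on_subset)
qed

lemma neg_entries_sB: "i \<noteq> 0 \<Longrightarrow> neg_entries n (sB i \<circ> g) = neg_entries n g"
  unfolding neg_entries_def sB_def Let_def by auto

lemma neg_entries_sB0:
  assumes g: "g \<in> SB n" and "0 < n"
  shows "neg_entries n (sB 0 \<circ> g) = sym_diff (neg_entries n g) {\<bar>inv g 1\<bar>}"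
proof -
  let ?q = "inv g 1"
  have bij: "bij g" using bij_SB[OF g] .
  have "1 \<in> signed_dom n" using \<open>0 < n\<close> by (simp add: signed_dom_iff)
  then have q: "?q \<in> signed_dom n" using SB_in_signed_dom[OF inv_in_SB[OF g]] by blast
  have "g ?q = 1" using bij by (simp add: bij_is_surj surj_f_inv_f)
  then have "g b = 1 \<or> g b = -1 \<longleftrightarrow> b = ?q \<or> b = - ?q" for b
    using SB_uminus[OF g q] bij by (metis bij_is_inj inj_eq)
  moreover have "b \<in> {1..int n} \<and> (b = ?q \<or> b = - ?q) \<longleftrightarrow> b = \<bar>?q\<bar>" for b
    using q unfolding signed_dom_iff by (cases "0 < ?q") auto
  ultimately have "b \<in> {1..int n} \<and> (g b = 1 \<or> g b = -1) \<longleftrightarrow> b = \<bar>?q\<bar>" for b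
    by blast
  moreover have "sB 0 x < 0 \<longleftrightarrow> (x < 0) \<noteq> (x = 1 \<or> x = -1)" for x
    unfolding sB_def by auto
  ultimately show ?thesis unfolding neg_entries_def by auto
qed

lemma left_descent_iff_inv_order:
  assumes g: "g \<in> SB n" and i: "i < n"
  shows "left_descent n g i \<longleftrightarrow> (\<forall>(x, y) \<in> swapped_pairs i. (inv g x < inv g y) \<noteq> (x < y))"
proof -
  have h: "inv g \<in> SB n" using inv_in_SB[OF g] .
  have gh: "g (inv g z) = z" for z using bij_SB[OF g] by (simp add: bij_is_surj surj_f_inv_f)
  have "(inv g x, inv g y) \<in> inv_pairs n g \<longleftrightarrow> (inv g x < inv g y) \<noteq> (x < y)"
    if "(x, y) \<in> swapped_pairs i" for x y
  proof -
    have "x \<in> signed_dom n" "y \<in> signed_dom n" "x \<noteq> y"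
      using that swapped_pairs_subset[OF i] swapped_pairs_irrefl by blast+
    moreover have "inv g x \<noteq> inv g y" using gh \<open>x \<noteq> y\<close> by metis
    ultimately show ?thesis unfolding inv_pairs_def by (auto simp: SB_in_signed_dom[OF h] gh)
  qed
  then show ?thesis unfolding left_descent_def swapped_positions_eq_image[OF g i] by auto
qed

lemma left_descent_iff:
  assumes g: "g \<in> SB n" and i: "i < n"
  shows "left_descent n g i \<longleftrightarrow>
    (if i = 0 then inv g 1 < 0 else inv g (int i + 1) < inv g (int i))"
proof -
  let ?h = "inv g"
  have h: "?h \<in> SB n" using inv_in_SB[OF g] .
  have h_uminus: "?h (- x) = - ?h x" if "x \<in> signed_dom n" for x
    using SB_uminus[OF h that] .
  show ?thesis
  proof (cases "i = 0")
    case True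
    have "1 \<in> signed_dom n" using i by (simp add: signed_dom_iff)
    then have "?h 1 \<noteq> 0" "?h (- 1) = - ?h 1"
      using SB_in_signed_dom[OF h] h_uminus by (auto simp: signed_dom_iff)
    with True show ?thesis unfolding left_descent_iff_inv_order[OF g i] swapped_pairs_def by auto
  next
    case False
    then have "int i \<in> signed_dom n" "int i + 1 \<in> signed_dom n"
      using i by (auto simp: signed_dom_iff)
    moreover have "- int i - 1 = - (int i + 1)" by simp
    ultimately have "?h (- int i) = - ?h (int i)" "?h (- int i - 1) = - ?h (int i + 1)"
      using h_uminus by metis+
    moreover have "?h (int i) \<noteq> ?h (int i + 1)"
      using bij_SB[OF g] by (metis bij_is_surj surj_f_inv_f add_cancel_left_right one_neq_zero)
    ultimately show ?thesis
      using False unfolding left_descent_iff_inv_order[OF g i] swapped_pairs_def by auto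
  qed
qed

lemma inv_weight_sB_le:
  assumes g: "g \<in> SB n" and i: "i < n"
  shows "inv_weight n (sB i \<circ> g) \<le> inv_weight n g + 4"
proof -
  have "card (inv_pairs n (sB i \<circ> g)) \<le> card (inv_pairs n g) + card (swapped_positions n g i)"
    unfolding inv_pairs_sB[OF g] by (rule card_sym_diff_le[OF finite_inv_pairs finite_swapped_positions])
  then have inv: "card (inv_pairs n (sB i \<circ> g)) \<le> card (inv_pairs n g) + card (swapped_pairs i)"
    using card_swapped_positions[OF g i] by simp
  show ?thesis
  proof (cases "i = 0")
    case True
    have "card (neg_entries n (sB 0 \<circ> g)) \<le> card (neg_entries n g) + 1"
      using card_sym_diff_le[OF finite_neg_entries, of "{\<bar>inv g 1\<bar>}"] neg_entries_sB0[OF g] i True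
      by simp
    then show ?thesis using inv True unfolding inv_weight_def card_swapped_pairs by simp
  next
    case False
    then show ?thesis using inv unfolding inv_weight_def card_swapped_pairs neg_entries_sB[OF False]
      by simp
  qed
qed

lemma inv_weight_sB_left_descent:
  assumes g: "g \<in> SB n" and i: "i < n" and descent: "left_descent n g i"
  shows "inv_weight n (sB i \<circ> g) + 4 = inv_weight n g"
proof -
  have "inv_pairs n (sB i \<circ> g) = inv_pairs n g - swapped_positions n g i"
    unfolding inv_pairs_sB[OF g] using descent by (auto simp: left_descent_def)
  moreover have "card (swapped_positions n g i) \<le> card (inv_pairs n g)"
    using descent finite_inv_pairs unfolding left_descent_def by (rule card_mono[rotated])
  ultimately have inv: "card (inv_pairs n (sB i \<circ> g)) + card (swapped_pairs i) = card (inv_pairs n g)"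
    using card_swapped_positions[OF g i] descent finite_inv_pairs unfolding left_descent_def
    by (simp add: card_Diff_subset finite_subset)
  show ?thesis
  proof (cases "i = 0")
    case True
    let ?q = "inv g 1"
    have "1 \<in> signed_dom n" using i by (simp add: signed_dom_iff)
    then have q: "?q \<in> signed_dom n" "g (- ?q) = -1"
      using SB_in_signed_dom[OF inv_in_SB[OF g]] SB_uminus[OF g]
        surj_f_inv_f[OF bij_is_surj[OF bij_SB[OF g]]] by auto
    have "?q < 0" using descent left_descent_iff[OF g i] True by simp
    then have "\<bar>?q\<bar> \<in> neg_entries n g" using q unfolding neg_entries_def signed_dom_iff by simp
    moreover have "0 < n" using i True by simp
    ultimately have "neg_entries n (sB 0 \<circ> g) = neg_entries n g - {\<bar>?q\<bar>}"
      using neg_entries_sB0[OF g] by blast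
    then have "card (neg_entries n (sB 0 \<circ> g)) + 1 = card (neg_entries n g)"
      using \<open>\<bar>?q\<bar> \<in> neg_entries n g\<close> finite_neg_entries
      by (metis Suc_eq_plus1 card_Suc_Diff1)
    then show ?thesis using inv True unfolding inv_weight_def card_swapped_pairs by simp
  next
    case False
    then show ?thesis using inv unfolding inv_weight_def card_swapped_pairs neg_entries_sB[OF False]
      by simp
  qed
qed

lemma SB_eq_id_if_fixes_positive:
  assumes g: "g \<in> SB n" and pos: "\<And>k. k \<in> {1..int n} \<Longrightarrow> g k = k"
  shows "g = id"
proof
  fix x
  consider "x \<notin> signed_dom n" | "x \<in> {1..int n}" | "- x \<in> {1..int n}" "x \<in> signed_dom n"
    unfolding signed_dom_iff by fastforce
  then show "g x = id x"
    by cases (use SB_fixed[OF g] pos SB_uminus[OF g] in force)+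
qed

lemma ex_left_descent:
  assumes g: "g \<in> SB n" and "g \<noteq> id"
  shows "\<exists>i<n. left_descent n g i"
proof (rule ccontr)
  assume no_descent: "\<not> ?thesis"
  let ?h = "\<lambda>k. inv g (int k)"
  have gh: "g (inv g z) = z" for z using bij_SB[OF g] by (simp add: bij_is_surj surj_f_inv_f)
  have h_dom: "?h k \<in> signed_dom n" if "1 \<le> k" "k \<le> n" for k
    using that SB_in_signed_dom[OF inv_in_SB[OF g]] by (simp add: signed_dom_iff)
  have "g k = k" if k: "k \<in> {1..int n}" for k
  proof -
    have "?h j < ?h (Suc j)" if "1 \<le> j" "j < n" for j
    proof -
      have "\<not> inv g (int j + 1) < inv g (int j)"
        using no_descent left_descent_iff[OF g, of j] that by auto
      then have "\<not> ?h (Suc j) < ?h j" by (metis of_nat_Suc add.commute)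
      moreover have "?h j \<noteq> ?h (Suc j)" using gh by (metis of_nat_eq_iff n_not_Suc_n)
      ultimately show ?thesis by simp
    qed
    moreover have "0 < ?h 1"
    proof -
      have "0 < n" using k by simp
      then have "\<not> ?h 1 < 0"
        using no_descent left_descent_iff[OF g, of 0] by auto
      moreover have "?h 1 \<noteq> 0" using h_dom[of 1] \<open>0 < n\<close> by (simp add: signed_dom_iff)
      ultimately show ?thesis by simp
    qed
    moreover have "?h n \<le> int n" using h_dom[of n] k by (simp add: signed_dom_iff abs_le_iff)
    ultimately have "?h (nat k) = int (nat k)" using k by (intro strict_mono_int_squeeze) auto
    moreover have "int (nat k) = k" using k by simp
    ultimately show ?thesis using gh by metis
  qed
  then show False using SB_eq_id_if_fixes_positive[OF g] \<open>g \<noteq> id\<close> by blast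
qed

definition word :: "nat list \<Rightarrow> int \<Rightarrow> int" where
  "word ws = foldr (\<lambda>i f. sB i \<circ> f) ws id"

lemma word_Nil: "word [] = id"
  and word_Cons: "word (i # ws) = sB i \<circ> word ws"
  unfolding word_def by simp_all

lemma word_in_SB: "set ws \<subseteq> {0..<n} \<Longrightarrow> word ws \<in> SB n"
  by (induction ws) (auto simp: word_Nil word_Cons intro: comp_in_SB sB_in_SB id_in_SB)

lemma inv_weight_id: "inv_weight n id = 0"
proof -
  have "inv_pairs n id = {}" "neg_entries n id = {}"
    unfolding inv_pairs_def neg_entries_def by auto
  then show ?thesis by (simp add: inv_weight_def)
qed

lemma inv_weight_word_le: "set ws \<subseteq> {0..<n} \<Longrightarrow> inv_weight n (word ws) \<le> 4 * length ws"
proof (induction ws)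
  case Nil
  show ?case by (simp only: word_Nil inv_weight_id list.size mult_0_right order_refl)
next
  case (Cons i ws)
  have ws: "set ws \<subseteq> {0..<n}" and i: "i < n" using Cons.prems by auto
  have "inv_weight n (word (i # ws)) \<le> inv_weight n (word ws) + 4"
    unfolding word_Cons using inv_weight_sB_le[OF word_in_SB[OF ws] i] .
  with Cons.IH[OF ws] show ?case by simp
qed

lemma ex_word_inv_weight:
  "g \<in> SB n \<Longrightarrow> \<exists>ws. set ws \<subseteq> {0..<n} \<and> word ws = g \<and> 4 * length ws = inv_weight n g"
proof (induction "inv_weight n g" arbitrary: g rule: less_induct)
  case less
  show ?case
  proof (cases "g = id")
    case True
    then show ?thesis by (intro exI[of _ "[]"]) (simp add: word_Nil inv_weight_id)
  next
    case False
    then obtain i where i: "i < n" "left_descent n g i"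
      using ex_left_descent[OF less.prems] by blast
    have weight: "inv_weight n (sB i \<circ> g) + 4 = inv_weight n g"
      using inv_weight_sB_left_descent[OF less.prems i] .
    obtain ws where ws: "set ws \<subseteq> {0..<n}" "word ws = sB i \<circ> g"
        "4 * length ws = inv_weight n (sB i \<circ> g)"
      using less.hyps[of "sB i \<circ> g"] weight sB_in_SB[OF i(1)] comp_in_SB less.prems by auto
    have "word (i # ws) = g" using ws(2) by (auto simp: word_Cons fun_eq_iff)
    with ws i weight show ?thesis by (intro exI[of _ "i # ws"]) auto
  qed
qed

lemma lenB_eq_inv_weight:
  assumes g: "g \<in> SB n"
  shows "4 * lenB n g = inv_weight n g"
proof -
  obtain ws where ws: "set ws \<subseteq> {0..<n}" "word ws = g" "4 * length ws = inv_weight n g"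
    using ex_word_inv_weight[OF g] by blast
  have "lenB n g \<le> length ws"
    unfolding lenB_def word_def[symmetric] by (rule Least_le) (use ws in blast)
  moreover obtain vs where "length vs = lenB n g" "set vs \<subseteq> {0..<n}" "g = word vs"
    using LeastI_ex[of "\<lambda>k. \<exists>ws. length ws = k \<and> set ws \<subseteq> {0..<n} \<and> g = word ws"] ws
    unfolding lenB_def word_def[symmetric] by blast
  then have "inv_weight n g \<le> 4 * lenB n g" using inv_weight_word_le by metis
  ultimately show ?thesis using ws(3) by linarith
qed

lemma inv_weight_le: "inv_weight n g \<le> 4 * n\<^sup>2"
proof -
  have "card (inv_pairs n g) \<le> card {(a, b). a \<in> signed_dom n \<and> b \<in> signed_dom n \<and> a \<noteq> b}"
    by (rule card_mono) (auto intro: rev_finite_subset[of "signed_dom n \<times> signed_dom n"]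
        simp: inv_pairs_def finite_signed_dom)
  moreover have "card (neg_entries n g) \<le> card {1..int n}"
    by (rule card_mono) (auto simp: neg_entries_def)
  moreover have "2 * n \<le> 4 * n\<^sup>2" by (simp add: power2_eq_square)
  ultimately show ?thesis by (simp add: inv_weight_def card_off_diagonal_signed_dom)
qed

lemma inv_weight_w0: "inv_weight n (w0 n) = 4 * n\<^sup>2"
proof -
  have "inv_pairs n (w0 n) = {(a, b). a \<in> signed_dom n \<and> b \<in> signed_dom n \<and> a \<noteq> b}"
    unfolding inv_pairs_def w0_def by auto
  moreover have "neg_entries n (w0 n) = {1..int n}"
    unfolding neg_entries_def w0_def signed_dom_iff by auto
  moreover have "2 * n \<le> 4 * n\<^sup>2" by (simp add: power2_eq_square)
  ultimately show ?thesis by (simp add: inv_weight_def card_off_diagonal_signed_dom)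
qed

lemma lenB_le_square: "g \<in> SB n \<Longrightarrow> lenB n g \<le> n\<^sup>2"
  using lenB_eq_inv_weight inv_weight_le by (metis mult_le_cancel1 zero_less_numeral)

lemma lenB_w0: "lenB n (w0 n) = n\<^sup>2"
  using lenB_eq_inv_weight[OF w0_in_SB[of n]] inv_weight_w0[of n] by simp

lemma Peak_id: "Peak n id = {}"
  unfolding Peak_def by auto

lemma Peak_w0: "Peak n (w0 n) = {}"
  unfolding Peak_def w0_def signed_dom_iff by auto

theorem corollary4p2:
  fixes n :: nat
  assumes "n \<ge> 2"
  shows "Max {dW n \<sigma> \<rho> | \<sigma> \<rho>. \<sigma> \<in> PB {} n \<and> \<rho> \<in> PB {} n} = n ^ 2"
proof (rule Max_eqI)
  let ?S = "{dW n \<sigma> \<rho> | \<sigma> \<rho>. \<sigma> \<in> PB {} n \<and> \<rho> \<in> PB {} n}"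
  show "d \<le> n\<^sup>2" if "d \<in> ?S" for d
    using that lenB_le_square comp_in_SB inv_in_SB unfolding PB_def dW_def by blast
  then show "finite ?S" by (meson finite_atMost finite_subset atMost_iff subsetI)
  have "w0 n \<in> PB {} n" "id \<in> PB {} n"
    unfolding PB_def using w0_in_SB id_in_SB Peak_w0 Peak_id by auto
  moreover have "dW n (w0 n) id = n\<^sup>2" by (simp add: dW_def lenB_w0)
  ultimately show "n\<^sup>2 \<in> ?S" by (metis (mono_tags, lifting) mem_Collect_eq)
qed

end
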